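(* Let $L:[0,T]\times\mathbb{R}^N\times\mathbb{R}^N\to\mathbb{R}\cup\{\pm\infty\}$ satisfy (L1)–(L3). Let $(t_0,x_0,u_0)\in(0,T]\times\mathbb{R}^N\times\mathbb{R}$ and $v_0\in\mathrm{dom}\,L(t_0,x_0,\cdot)$. Then there exist $\tau>0$ and a $C^1$ function $(x,u):[t_0-\tau,t_0]\to\mathbb{R}^N\times\mathbb{R}$ with $(x,u)(t_0)=(x_0,u_0)$ such that $(\dot x(t),\dot u(t))\in Q(t,x(t))$ for all $t\in[t_0-\tau,t_0]$ and the left derivative at $t_0$ is $(\dot x,\dot u)(t_0^-)=(v_0,-L(t_0,x_0,v_0))$.
   Context: $\mathrm{dom}\,L(t,x,\cdot)=\{v:L(t,x,v)\neq\pm\infty\}$; proper means never $-\infty$ and not identically $+\infty$. $Q(t,x):=\{(v,\eta)\in\mathbb{R}^N\times\mathbb{R}: L(t,x,v)\leq-\eta\}$ for $(t,x)\in[0,T]\times\mathbb{R}^N$. (L1) $L$ is lower semicontinuous in all variables. (L2) $L(t,x,\cdot)$ is convex and proper for every $t,x$. (L3) for every $(t,x,v)$ and every $(t_n,x_n)\to(t,x)$ in $[0,T]\times\mathbb{R}^N$ there exist $v_n\to v$ with $L(t_n,x_n,v_n)\to L(t,x,v)$. *)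

theory Defs
  imports "HOL-Analysis.Analysis"
begin

type_synonym 'a lagrangian = "real \<Rightarrow> 'a \<Rightarrow> 'a \<Rightarrow> ereal"

definition domL :: "'a lagrangian \<Rightarrow> real \<Rightarrow> 'a \<Rightarrow> 'a set" where
  "domL L t x = {v. L t x v \<noteq> \<infinity> \<and> L t x v \<noteq> -\<infinity>}"

definition Qset :: "'a lagrangian \<Rightarrow> real \<Rightarrow> 'a \<Rightarrow> ('a \<times> real) set" where
  "Qset L t x = {(v, \<eta>). L t x v \<le> ereal (-\<eta>)}"

definition L1 :: "real \<Rightarrow> 'a::euclidean_space lagrangian \<Rightarrow> bool" where
  "L1 T L \<longleftrightarrow> (\<forall>t x v tn xn vn.
      t \<in> {0..T} \<and> (\<forall>n. tn n \<in> {0..T}) \<and> tn \<longlonglongrightarrow> t \<and> xn \<longlonglongrightarrow> x \<and> vn \<longlonglongrightarrow> v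
      \<longrightarrow> L t x v \<le> liminf (\<lambda>n. L (tn n) (xn n) (vn n)))"

definition L2 :: "real \<Rightarrow> 'a::euclidean_space lagrangian \<Rightarrow> bool" where
  "L2 T L \<longleftrightarrow> (\<forall>t\<in>{0..T}. \<forall>x.
      (\<forall>v. L t x v \<noteq> -\<infinity>) \<and> (\<exists>v. L t x v \<noteq> \<infinity>) \<and>
      (\<forall>v w (a::real). 0 < a \<and> a < 1 \<longrightarrow>
          L t x (a *\<^sub>R v + (1 - a) *\<^sub>R w) \<le> ereal a * L t x v + ereal (1 - a) * L t x w))"

definition L3 :: "real \<Rightarrow> 'a::euclidean_space lagrangian \<Rightarrow> bool" where
  "L3 T L \<longleftrightarrow> (\<forall>t x v tn xn.
      t \<in> {0..T} \<and> (\<forall>n. tn n \<in> {0..T}) \<and> tn \<longlonglongrightarrow> t \<and> xn \<longlonglongrightarrow> x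
      \<longrightarrow> (\<exists>vn. vn \<longlonglongrightarrow> v \<and> (\<lambda>n. L (tn n) (xn n) (vn n)) \<longlonglongrightarrow> L t x v))"

end

theory Submission
  imports Defs "HOL-Complex_Analysis.Great_Picard"
begin

text \<open>The sets \<open>E(t, x) = {(v, s). L(t, x, v) \<le> s}\<close> are nonempty, closed and convex by (L1) and (L2),
  and (L3) makes them depend lower hemicontinuously on \<open>(t, x)\<close>. Michael's selection theorem on the
  compact set \<open>[0, t0] \<times> B(x0, 1)\<close> yields a continuous selection \<open>(v, s)\<close> through
  \<open>(v0, L(t0, x0, v0))\<close>, which Dugundji's theorem extends to a bounded continuous field on the
  whole space. Peano's theorem then solves \<open>x' = v(t, x)\<close>, \<open>u' = - s(t, x)\<close> backwards from
  \<open>(x0, u0)\<close>; for a short time the solution stays in the ball, so \<open>(x', u')\<close> lies in \<open>Q(t, x)\<close>.\<close>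

section \<open>Michael's selection theorem\<close>

definition lower_hemicontinuous_on :: "'p::metric_space set \<Rightarrow> ('p \<Rightarrow> 'y::metric_space set) \<Rightarrow> bool" where
  "lower_hemicontinuous_on K \<Phi> \<longleftrightarrow>
     (\<forall>p\<in>K. \<forall>y\<in>\<Phi> p. \<forall>e>0. \<exists>d>0. \<forall>q\<in>K. dist q p < d \<longrightarrow> (\<exists>y'\<in>\<Phi> q. dist y' y < e))"

lemma lower_hemicontinuous_onD:
  assumes "lower_hemicontinuous_on K \<Phi>" "p \<in> K" "y \<in> \<Phi> p" "0 < e"
  obtains d where "0 < d" "\<And>q. q \<in> K \<Longrightarrow> dist q p < d \<Longrightarrow> \<exists>y'\<in>\<Phi> q. dist y' y < e"
  using assms unfolding lower_hemicontinuous_on_def by metis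

lemma lower_hemicontinuous_onI_sequentially:
  assumes "\<And>p y qs e. p \<in> K \<Longrightarrow> y \<in> \<Phi> p \<Longrightarrow> (\<And>n. qs n \<in> K) \<Longrightarrow> qs \<longlonglongrightarrow> p \<Longrightarrow> 0 < e \<Longrightarrow>
             \<forall>\<^sub>F n in sequentially. \<exists>y'\<in>\<Phi> (qs n). dist y' y < e"
  shows "lower_hemicontinuous_on K \<Phi>"
  unfolding lower_hemicontinuous_on_def
proof (intro ballI allI impI)
  fix p y and e :: real
  assume "p \<in> K" "y \<in> \<Phi> p" "0 < e"
  then have "\<forall>\<^sub>F q in at p within K. \<exists>y'\<in>\<Phi> q. dist y' y < e"
    using assms by (intro sequentially_imp_eventually_within) auto
  then obtain d where "d > 0" "\<And>q. q \<in> K \<Longrightarrow> q \<noteq> p \<Longrightarrow> dist q p < d \<Longrightarrow> \<exists>y'\<in>\<Phi> q. dist y' y < e"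
    unfolding eventually_at by blast
  with \<open>y \<in> \<Phi> p\<close> \<open>0 < e\<close> show "\<exists>d>0. \<forall>q\<in>K. dist q p < d \<longrightarrow> (\<exists>y'\<in>\<Phi> q. dist y' y < e)"
    by (metis dist_self)
qed

lemma lower_hemicontinuous_on_Int_ball:
  assumes lhc: "lower_hemicontinuous_on K \<Phi>" and f: "continuous_on K f"
  shows "lower_hemicontinuous_on K (\<lambda>p. \<Phi> p \<inter> ball (f p) r)"
  unfolding lower_hemicontinuous_on_def
proof (intro ballI allI impI)
  fix p y and e :: real
  assume p: "p \<in> K" and y: "y \<in> \<Phi> p \<inter> ball (f p) r" and e: "0 < e"
  define m where "m = r - dist (f p) y"
  have m: "m > 0" using y unfolding m_def by simp
  obtain d1 where d1: "d1 > 0" "\<And>q. q \<in> K \<Longrightarrow> dist q p < d1 \<Longrightarrow> \<exists>y'\<in>\<Phi> q. dist y' y < min e (m/2)"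
    using lower_hemicontinuous_onD[OF lhc p, of y "min e (m/2)"] y e m by auto
  obtain d2 where d2: "d2 > 0" "\<And>q. q \<in> K \<Longrightarrow> dist q p < d2 \<Longrightarrow> dist (f q) (f p) < m/2"
    using f p m unfolding continuous_on_iff by (metis half_gt_zero)
  show "\<exists>d>0. \<forall>q\<in>K. dist q p < d \<longrightarrow> (\<exists>y'\<in>\<Phi> q \<inter> ball (f q) r. dist y' y < e)"
  proof (intro exI[of _ "min d1 d2"] conjI ballI impI)
    fix q assume q: "q \<in> K" "dist q p < min d1 d2"
    then obtain y' where y': "y' \<in> \<Phi> q" "dist y' y < min e (m/2)" using d1 by auto
    have "dist (f q) y' \<le> dist (f q) (f p) + dist (f p) y + dist y y'"
      by (metis dist_triangle add.commute add_left_mono order_trans dist_commute)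
    also have "\<dots> < r" using d2(2)[of q] q y'(2) unfolding m_def by (auto simp: dist_commute)
    finally show "\<exists>y'\<in>\<Phi> q \<inter> ball (f q) r. dist y' y < e"
      using y' by (intro bexI[of _ y']) auto
  qed (use d1 d2 in auto)
qed

lemma convex_combination_near_convex:
  fixes y :: "'i \<Rightarrow> 'y::real_normed_vector"
  assumes F: "finite F" and C: "convex C" "C \<noteq> {}"
    and a: "sum a F = 1" "\<And>i. i \<in> F \<Longrightarrow> 0 \<le> a i"
    and near: "\<And>i. i \<in> F \<Longrightarrow> 0 < a i \<Longrightarrow> \<exists>c\<in>C. dist (y i) c \<le> e"
  shows "\<exists>c\<in>C. dist (\<Sum>i\<in>F. a i *\<^sub>R y i) c \<le> e"
proof -
  define z where "z i = (SOME c. c \<in> C \<and> (0 < a i \<longrightarrow> dist (y i) c \<le> e))" for i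
  have z: "z i \<in> C \<and> (0 < a i \<longrightarrow> dist (y i) (z i) \<le> e)" if i: "i \<in> F" for i
    unfolding z_def
  proof (rule someI_ex)
    show "\<exists>c. c \<in> C \<and> (0 < a i \<longrightarrow> dist (y i) c \<le> e)"
      using near[OF i] C(2) by (cases "0 < a i") auto
  qed
  have "(\<Sum>i\<in>F. a i *\<^sub>R z i) \<in> C"
    using convex_sum[OF F C(1) a] z by blast
  have "dist (\<Sum>i\<in>F. a i *\<^sub>R y i) (\<Sum>i\<in>F. a i *\<^sub>R z i) = norm (\<Sum>i\<in>F. a i *\<^sub>R (y i - z i))"
    by (simp add: dist_norm scaleR_diff_right sum_subtractf)
  also have "\<dots> \<le> (\<Sum>i\<in>F. a i * e)"
  proof (rule order_trans[OF norm_sum], rule sum_mono)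
    fix i assume i: "i \<in> F"
    show "norm (a i *\<^sub>R (y i - z i)) \<le> a i * e"
    proof (cases "a i = 0")
      case False
      then have "norm (y i - z i) \<le> e"
        using a(2)[OF i] z[OF i] by (simp add: dist_norm less_le)
      then show ?thesis using a(2)[OF i] by (simp add: mult_left_mono)
    qed simp
  qed
  also have "\<dots> = e" using a(1) by (simp flip: sum_distrib_right)
  finally show ?thesis using \<open>(\<Sum>i\<in>F. a i *\<^sub>R z i) \<in> C\<close> by blast
qed

text \<open>A partition of unity subordinate to a finite cover by balls on which \<open>\<Phi>\<close> comes close to a
  fixed point \<open>yp p\<close>; convexity of the values absorbs the convex combination.\<close>

lemma approximate_selection:
  fixes \<Phi> :: "'p::metric_space \<Rightarrow> 'y::real_normed_vector set"
  assumes K: "compact K" and cvx: "\<And>p. p \<in> K \<Longrightarrow> convex (\<Phi> p)"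
    and ne: "\<And>p. p \<in> K \<Longrightarrow> \<Phi> p \<noteq> {}"
    and lhc: "lower_hemicontinuous_on K \<Phi>" and e: "0 < e"
  obtains g where "continuous_on K g" "\<And>p. p \<in> K \<Longrightarrow> \<exists>y\<in>\<Phi> p. dist (g p) y \<le> e"
proof -
  define yp where "yp p = (SOME y. y \<in> \<Phi> p)" for p
  have yp: "yp p \<in> \<Phi> p" if "p \<in> K" for p
    using ne[OF that] unfolding yp_def by (meson ex_in_conv someI_ex)
  have "\<forall>p\<in>K. \<exists>d>0. \<forall>q\<in>K. dist q p < d \<longrightarrow> (\<exists>y'\<in>\<Phi> q. dist y' (yp p) < e)"
    using lhc yp e unfolding lower_hemicontinuous_on_def by blast
  then obtain d where d_pos: "\<And>p. p \<in> K \<Longrightarrow> d p > 0"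
    and d: "\<And>p q. p \<in> K \<Longrightarrow> q \<in> K \<Longrightarrow> dist q p < d p \<Longrightarrow> \<exists>y'\<in>\<Phi> q. dist y' (yp p) < e"
    by metis
  have "K \<subseteq> (\<Union>p\<in>K. ball p (d p))"
    using d_pos by force
  then obtain F where F: "F \<subseteq> K" "finite F" "K \<subseteq> (\<Union>p\<in>F. ball p (d p))"
    using compactE_image[OF K, of K "\<lambda>p. ball p (d p)"] by blast
  define \<phi> where "\<phi> p q = max 0 (d p - dist q p)" for p q
  define S where "S q = (\<Sum>p\<in>F. \<phi> p q)" for q
  have \<phi>_nonneg: "\<phi> p q \<ge> 0" for p q unfolding \<phi>_def by simp
  have S_pos: "S q > 0" if "q \<in> K" for q
  proof -
    obtain p where "p \<in> F" "dist p q < d p" using F(3) \<open>q \<in> K\<close> by auto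
    then have "\<phi> p q > 0" unfolding \<phi>_def by (simp add: dist_commute)
    then show ?thesis unfolding S_def using \<open>p \<in> F\<close> F(2) \<phi>_nonneg by (meson sum_pos2)
  qed
  define g where "g q = (1 / S q) *\<^sub>R (\<Sum>p\<in>F. \<phi> p q *\<^sub>R yp p)" for q
  have "continuous_on K g"
    unfolding g_def S_def \<phi>_def
    by (intro continuous_intros) (auto dest!: S_pos[unfolded S_def \<phi>_def])
  moreover have "\<exists>y\<in>\<Phi> q. dist (g q) y \<le> e" if q: "q \<in> K" for q
  proof -
    have "g q = (\<Sum>p\<in>F. (\<phi> p q / S q) *\<^sub>R yp p)"
      unfolding g_def by (simp add: scaleR_sum_right)
    also have "\<exists>y\<in>\<Phi> q. dist \<dots> y \<le> e"
    proof (rule convex_combination_near_convex[OF F(2) cvx[OF q] ne[OF q]])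
      show "(\<Sum>p\<in>F. \<phi> p q / S q) = 1"
        using S_pos[OF q] by (simp add: S_def flip: sum_divide_distrib)
      show "0 \<le> \<phi> p q / S q" for p
        using S_pos[OF q] \<phi>_nonneg by simp
      fix p assume p: "p \<in> F" and "0 < \<phi> p q / S q"
      then have "dist q p < d p"
        using S_pos[OF q] unfolding \<phi>_def by (simp add: zero_less_divide_iff)
      then obtain y' where "y' \<in> \<Phi> q" "dist y' (yp p) < e"
        using d[of p q] F(1) p q by blast
      then show "\<exists>y\<in>\<Phi> q. dist (yp p) y \<le> e"
        by (intro bexI[of _ y']) (auto simp: dist_commute)
    qed
    finally show ?thesis .
  qed
  ultimately show thesis using that by blast
qed

text \<open>The base point is prescribed by blending with the constant \<open>y0\<close> near \<open>p0\<close>.\<close>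

lemma approximate_selection_through:
  fixes \<Phi> :: "'p::metric_space \<Rightarrow> 'y::real_normed_vector set"
  assumes K: "compact K" and cvx: "\<And>p. p \<in> K \<Longrightarrow> convex (\<Phi> p)"
    and ne: "\<And>p. p \<in> K \<Longrightarrow> \<Phi> p \<noteq> {}"
    and lhc: "lower_hemicontinuous_on K \<Phi>"
    and p0: "p0 \<in> K" and y0: "y0 \<in> \<Phi> p0" and e: "0 < e"
  obtains g where "continuous_on K g" "g p0 = y0" "\<And>p. p \<in> K \<Longrightarrow> \<exists>y\<in>\<Phi> p. dist (g p) y < e"
proof -
  obtain g1 where g1_cont: "continuous_on K g1" and g1: "\<And>p. p \<in> K \<Longrightarrow> \<exists>y\<in>\<Phi> p. dist (g1 p) y \<le> e/2"
    using approximate_selection[OF K cvx ne lhc, of "e/2"] e by auto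
  obtain \<rho> where \<rho>: "\<rho> > 0" and \<rho>_lhc: "\<And>q. q \<in> K \<Longrightarrow> dist q p0 < \<rho> \<Longrightarrow> \<exists>y'\<in>\<Phi> q. dist y' y0 < e/2"
    using lower_hemicontinuous_onD[OF lhc p0 y0, of "e/2"] e by auto
  define \<psi> where "\<psi> q = max 0 (1 - dist q p0 / \<rho>)" for q
  define g where "g q = \<psi> q *\<^sub>R y0 + (1 - \<psi> q) *\<^sub>R g1 q" for q
  have "continuous_on K g"
    unfolding g_def \<psi>_def using g1_cont \<rho> by (intro continuous_intros) auto
  moreover have "g p0 = y0" unfolding g_def \<psi>_def by simp
  moreover have "\<exists>y\<in>\<Phi> p. dist (g p) y < e" if p: "p \<in> K" for p
  proof -
    obtain z1 where z1: "z1 \<in> \<Phi> p" "dist (g1 p) z1 \<le> e/2" using g1[OF p] by blast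
    show ?thesis
    proof (cases "\<psi> p > 0")
      case False
      then have "\<psi> p = 0" unfolding \<psi>_def by simp
      then show ?thesis using z1 e unfolding g_def by (intro bexI[of _ z1]) auto
    next
      case True
      then have "0 < 1 - dist p p0 / \<rho>" unfolding \<psi>_def by simp
      then have "dist p p0 < \<rho>" using \<rho> by (simp add: field_simps)
      then obtain y' where y': "y' \<in> \<Phi> p" "dist y' y0 < e/2" using \<rho>_lhc p by blast
      have \<psi>: "0 \<le> \<psi> p" "\<psi> p \<le> 1" unfolding \<psi>_def using \<rho> by auto
      define z where "z = \<psi> p *\<^sub>R y' + (1 - \<psi> p) *\<^sub>R z1"
      have "z \<in> \<Phi> p" unfolding z_def
        using cvx[OF p] y'(1) z1(1) \<psi> by (simp add: convex_def)
      have "g p - z = \<psi> p *\<^sub>R (y0 - y') + (1 - \<psi> p) *\<^sub>R (g1 p - z1)"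
        unfolding g_def z_def by (simp add: algebra_simps)
      then have "norm (g p - z) \<le> \<psi> p * norm (y0 - y') + (1 - \<psi> p) * norm (g1 p - z1)"
        using \<psi> by (metis abs_of_nonneg diff_ge_0_iff_ge norm_scaleR norm_triangle_ineq)
      also have "\<dots> < \<psi> p * e + (1 - \<psi> p) * e"
        using \<psi> y'(2) z1(2) e True
        by (intro add_less_le_mono mult_strict_left_mono mult_left_mono)
           (auto simp: dist_norm norm_minus_commute)
      also have "\<dots> = e" by (simp add: algebra_simps)
      finally show ?thesis using \<open>z \<in> \<Phi> p\<close> by (intro bexI[of _ z]) (auto simp: dist_norm)
    qed
  qed
  ultimately show thesis using that by blast
qed

lemma uniformly_convergent_on_summable_steps:
  fixes F :: "nat \<Rightarrow> 'a \<Rightarrow> 'b::banach"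
  assumes "\<And>n x. x \<in> K \<Longrightarrow> dist (F (Suc n) x) (F n x) \<le> M n" and "summable M"
  shows "uniformly_convergent_on K F"
proof -
  have "uniform_limit K (\<lambda>n x. \<Sum>i<n. F (Suc i) x - F i x) (\<lambda>x. \<Sum>i. F (Suc i) x - F i x) sequentially"
    using assms by (intro Weierstrass_m_test) (auto simp: dist_norm)
  then have "uniform_limit K (\<lambda>n x. F 0 x + (\<Sum>i<n. F (Suc i) x - F i x))
               (\<lambda>x. F 0 x + (\<Sum>i. F (Suc i) x - F i x)) sequentially"
    by (intro uniform_limit_add uniform_limit_const)
  moreover have "F 0 x + (\<Sum>i<n. F (Suc i) x - F i x) = F n x" for n x
    using sum_lessThan_telescope[of "\<lambda>i. F i x" n] by simp
  ultimately have "uniform_limit K F (\<lambda>x. F 0 x + (\<Sum>i. F (Suc i) x - F i x)) sequentially"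
    by simp
  then show ?thesis unfolding uniformly_convergent_on_def by blast
qed

lemma selection_refinement:
  fixes E :: "'p::metric_space \<Rightarrow> 'y::real_normed_vector set"
  assumes K: "compact K" and cvx: "\<And>p. p \<in> K \<Longrightarrow> convex (E p)"
    and lhc: "lower_hemicontinuous_on K E"
    and p0: "p0 \<in> K" and y0: "y0 \<in> E p0" and r': "0 < r'"
    and f: "continuous_on K f" "f p0 = y0" "\<And>p. p \<in> K \<Longrightarrow> \<exists>y\<in>E p. dist (f p) y < r"
  obtains g where "continuous_on K g" "g p0 = y0" "\<And>p. p \<in> K \<Longrightarrow> \<exists>y\<in>E p. dist (g p) y < r'"
    "\<And>p. p \<in> K \<Longrightarrow> dist (g p) (f p) \<le> r' + r"
proof -
  define \<Phi> where "\<Phi> p = E p \<inter> ball (f p) r" for p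
  obtain g where g: "continuous_on K g" "g p0 = y0" "\<And>p. p \<in> K \<Longrightarrow> \<exists>y\<in>\<Phi> p. dist (g p) y < r'"
  proof (rule approximate_selection_through[OF K _ _ _ p0 _ r'])
    show "convex (\<Phi> p)" if "p \<in> K" for p
      unfolding \<Phi>_def using cvx[OF that] by (simp add: convex_Int)
    show "\<Phi> p \<noteq> {}" if "p \<in> K" for p
      using f(3)[OF that] unfolding \<Phi>_def by auto
    show "lower_hemicontinuous_on K \<Phi>"
      unfolding \<Phi>_def by (rule lower_hemicontinuous_on_Int_ball[OF lhc f(1)])
    have "0 < r" using f(3)[OF p0] by (auto intro: le_less_trans[OF zero_le_dist])
    then show "y0 \<in> \<Phi> p0" using f(2) y0 unfolding \<Phi>_def by simp
  qed blast
  have "dist (g p) (f p) \<le> r' + r" if p: "p \<in> K" for p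
  proof -
    obtain y where "y \<in> \<Phi> p" "dist (g p) y < r'" using g(3)[OF p] by blast
    then show ?thesis unfolding \<Phi>_def
      using dist_triangle[of "g p" "f p" y] by (auto simp: dist_commute)
  qed
  with g that show thesis unfolding \<Phi>_def by blast
qed

lemma limit_in_closed_if_approached:
  assumes E: "closed E" and X: "X \<longlonglongrightarrow> l" and r: "r \<longlonglongrightarrow> 0"
    and near: "\<And>n. \<exists>y\<in>E. dist (X n) y < r n"
  shows "l \<in> E"
proof (rule closed_approachable[OF E, THEN iffD1], intro allI impI)
  fix e :: real assume "0 < e"
  have "\<forall>\<^sub>F n in sequentially. dist (X n) l < e/2 \<and> r n < e/2"
    using X r \<open>0 < e\<close> by (intro eventually_conj tendstoD order_tendstoD(2)) auto
  then obtain n where n: "dist (X n) l < e/2" "r n < e/2"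
    by (auto dest: eventually_happens'[OF sequentially_bot])
  moreover obtain y where "y \<in> E" "dist (X n) y < r n" using near by blast
  ultimately show "\<exists>y\<in>E. dist y l < e"
    using dist_triangle3[of y l "X n"] by (intro bexI[of _ y]) auto
qed

theorem michael_selection:
  fixes E :: "'p::metric_space \<Rightarrow> 'y::banach set"
  assumes K: "compact K" and cvx: "\<And>p. p \<in> K \<Longrightarrow> convex (E p)"
    and cl: "\<And>p. p \<in> K \<Longrightarrow> closed (E p)" and ne: "\<And>p. p \<in> K \<Longrightarrow> E p \<noteq> {}"
    and lhc: "lower_hemicontinuous_on K E"
    and p0: "p0 \<in> K" and y0: "y0 \<in> E p0"
  obtains f where "continuous_on K f" "f p0 = y0" "\<And>p. p \<in> K \<Longrightarrow> f p \<in> E p"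
proof -
  define P where "P n f \<longleftrightarrow> continuous_on K f \<and> f p0 = y0 \<and>
                             (\<forall>p\<in>K. \<exists>y\<in>E p. dist (f p) y < (1/2::real)^n)" for n f
  have "\<exists>f. P 0 f"
  proof -
    obtain g where "continuous_on K g" "g p0 = y0" "\<And>p. p \<in> K \<Longrightarrow> \<exists>y\<in>E p. dist (g p) y < 1"
      using approximate_selection_through[OF K cvx ne lhc p0 y0, of 1] by auto
    then show ?thesis unfolding P_def by auto
  qed
  moreover have "\<exists>g. P (Suc n) g \<and> (\<forall>p\<in>K. dist (g p) (f p) \<le> 2 * (1/2)^n)" if "P n f" for n f
  proof -
    have r': "(0::real) < (1/2)^Suc n" by simp
    have f: "continuous_on K f" "f p0 = y0" "\<And>p. p \<in> K \<Longrightarrow> \<exists>y\<in>E p. dist (f p) y < (1/2)^n"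
      using that unfolding P_def by auto
    obtain g where g: "continuous_on K g" "g p0 = y0" "\<And>p. p \<in> K \<Longrightarrow> \<exists>y\<in>E p. dist (g p) y < (1/2)^Suc n"
      "\<And>p. p \<in> K \<Longrightarrow> dist (g p) (f p) \<le> (1/2)^Suc n + (1/2)^n"
      using selection_refinement[OF K cvx lhc p0 y0 r' f] by blast
    have "P (Suc n) g" using g(1-3) unfolding P_def by blast
    moreover have "dist (g p) (f p) \<le> 2 * (1/2)^n" if "p \<in> K" for p
      using g(4)[OF that] by (rule order_trans) simp
    ultimately show ?thesis by blast
  qed
  ultimately obtain F where F: "\<And>n. P n (F n)"
    and F_step: "\<And>n p. p \<in> K \<Longrightarrow> dist (F (Suc n) p) (F n p) \<le> 2 * (1/2)^n"
    using dependent_nat_choice[of P "\<lambda>n f g. \<forall>p\<in>K. dist (g p) (f p) \<le> 2 * (1/2)^n"] by blast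
  have "uniformly_convergent_on K F"
  proof (rule uniformly_convergent_on_summable_steps)
    show "summable (\<lambda>n. 2 * (1/2::real)^n)" by (intro summable_mult summable_geometric) simp
  qed (rule F_step)
  then obtain f where f: "uniform_limit K F f sequentially"
    unfolding uniformly_convergent_on_def by blast
  have "continuous_on K f"
    using F f unfolding P_def by (intro uniform_limit_theorem) auto
  moreover have "f p0 = y0"
    using tendsto_uniform_limitI[OF f p0] F unfolding P_def by (simp add: LIMSEQ_const_iff)
  moreover have "f p \<in> E p" if p: "p \<in> K" for p
  proof (rule limit_in_closed_if_approached[OF cl[OF p] tendsto_uniform_limitI[OF f p]])
    show "(\<lambda>n. (1/2::real)^n) \<longlonglongrightarrow> 0" by (rule LIMSEQ_power_zero) simp
  qed (use F p in \<open>simp add: P_def\<close>)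
  ultimately show thesis using that by blast
qed

section \<open>Euler polygons and Peano's theorem\<close>

text \<open>Backward Euler scheme with step \<open>h\<close> from \<open>(t0, z0)\<close>: the node \<open>j\<close> sits at time \<open>t0 - j h\<close>,
  and \<open>euler_weight h t0 j t\<close> is the length of \<open>[t, t0] \<inter> [t0 - (j + 1) h, t0 - j h]\<close>.\<close>

primrec euler_node :: "(real \<times> 'b::real_normed_vector \<Rightarrow> 'b) \<Rightarrow> real \<Rightarrow> 'b \<Rightarrow> real \<Rightarrow> nat \<Rightarrow> 'b" where
  "euler_node W t0 z0 h 0 = z0"
| "euler_node W t0 z0 h (Suc j) =
     euler_node W t0 z0 h j - h *\<^sub>R W (t0 - real j * h, euler_node W t0 z0 h j)"

definition euler_weight :: "real \<Rightarrow> real \<Rightarrow> nat \<Rightarrow> real \<Rightarrow> real" where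
  "euler_weight h t0 j t = max 0 (min h (t0 - real j * h - t))"

definition euler_polygon ::
    "(real \<times> 'b::real_normed_vector \<Rightarrow> 'b) \<Rightarrow> real \<Rightarrow> 'b \<Rightarrow> real \<Rightarrow> nat \<Rightarrow> real \<Rightarrow> 'b" where
  "euler_polygon W t0 z0 h N t =
     z0 - (\<Sum>j<N. euler_weight h t0 j t *\<^sub>R W (t0 - real j * h, euler_node W t0 z0 h j))"

lemma sum_euler_weight:
  assumes "h > 0"
  shows "(\<Sum>j<N. euler_weight h t0 j t) = max 0 (min (real N * h) (t0 - t))"
proof (induction N)
  case (Suc N)
  have max_min_add: "max 0 (min A x) + max 0 (min h (x - A)) = max 0 (min (A + h) x)"
    if "0 \<le> A" for A x :: real
    using that assms by (simp add: max_def min_def)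
  have "(\<Sum>j<Suc N. euler_weight h t0 j t)
        = max 0 (min (real N * h) (t0 - t)) + max 0 (min h (t0 - real N * h - t))"
    using Suc.IH by (simp add: euler_weight_def)
  also have "\<dots> = max 0 (min (real N * h + h) (t0 - t))"
    using max_min_add[of "real N * h" "t0 - t"] assms by (simp add: algebra_simps)
  finally show ?case by (simp add: algebra_simps)
qed simp

lemma euler_weight_grid:
  assumes "h > 0"
  shows "euler_weight h t0 j (t0 - real k * h) = (if j < k then h else 0)"
proof -
  have eq: "t0 - real j * h - (t0 - real k * h) = (real k - real j) * h" by (simp add: algebra_simps)
  show ?thesis
  proof (cases "j < k")
    case True
    then have "(real k - real j) * h \<ge> 1 * h" using assms by (intro mult_right_mono) auto
    then show ?thesis using True assms unfolding euler_weight_def eq by simp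
  next
    case False
    then have "(real k - real j) * h \<le> 0" using assms by (simp add: mult_nonpos_nonneg)
    then show ?thesis using False assms unfolding euler_weight_def eq by simp
  qed
qed

lemma euler_weight_antimono: "s \<le> t \<Longrightarrow> euler_weight h t0 j t \<le> euler_weight h t0 j s"
  unfolding euler_weight_def by (simp add: max_def min_def)

lemma euler_weight_change_imp_node_between:
  assumes "s \<le> t" "euler_weight h t0 j s \<noteq> euler_weight h t0 j t"
  shows "s < t0 - real j * h" "t0 - real j * h < t + h"
  using assms unfolding euler_weight_def by (auto simp: max_def min_def split: if_splits)

lemma euler_node_eq_sum:
  "euler_node W t0 z0 h k = z0 - (\<Sum>j<k. h *\<^sub>R W (t0 - real j * h, euler_node W t0 z0 h j))"
  by (induction k) (simp_all add: algebra_simps)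

lemma euler_polygon_grid:
  assumes "h > 0" "k \<le> N"
  shows "euler_polygon W t0 z0 h N (t0 - real k * h) = euler_node W t0 z0 h k"
proof -
  have "(\<Sum>j<N. euler_weight h t0 j (t0 - real k * h) *\<^sub>R W (t0 - real j * h, euler_node W t0 z0 h j))
      = (\<Sum>j<N. if j \<in> {..<k} then h *\<^sub>R W (t0 - real j * h, euler_node W t0 z0 h j) else 0)"
    using euler_weight_grid[OF assms(1)] by (intro sum.cong) auto
  also have "\<dots> = (\<Sum>j\<in>{..<N} \<inter> {..<k}. h *\<^sub>R W (t0 - real j * h, euler_node W t0 z0 h j))"
    by (rule sum.inter_restrict[symmetric]) simp
  also have "{..<N} \<inter> {..<k} = {..<k}" using assms(2) by auto
  finally show ?thesis unfolding euler_polygon_def euler_node_eq_sum[of W t0 z0 h k] by simp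
qed

text \<open>Between \<open>s\<close> and \<open>t\<close> the polygon moves along the slopes of the nodes whose step interval
  meets \<open>[s, t]\<close>, each weighted by the length of the overlap.\<close>

lemma euler_polygon_increment:
  assumes h: "h > 0" and st: "t0 - real N * h \<le> s" "s \<le> t" "t \<le> t0"
    and slopes: "\<And>j. j < N \<Longrightarrow> s < t0 - real j * h \<Longrightarrow> t0 - real j * h < t + h \<Longrightarrow>
                   norm (W (t0 - real j * h, euler_node W t0 z0 h j) - D) \<le> \<eta>"
  shows "norm (euler_polygon W t0 z0 h N t - euler_polygon W t0 z0 h N s - (t - s) *\<^sub>R D) \<le> (t - s) * \<eta>"
proof -
  define c where "c j = W (t0 - real j * h, euler_node W t0 z0 h j)" for j
  define a where "a j = euler_weight h t0 j s - euler_weight h t0 j t" for j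
  have a_sum: "(\<Sum>j<N. a j) = t - s"
    unfolding a_def sum_subtractf sum_euler_weight[OF h] using st h by simp
  have "euler_polygon W t0 z0 h N t - euler_polygon W t0 z0 h N s - (t - s) *\<^sub>R D
        = (\<Sum>j<N. a j *\<^sub>R (c j - D))"
    unfolding euler_polygon_def a_sum[symmetric] c_def a_def
    by (simp add: scaleR_sum_left algebra_simps sum_subtractf[symmetric])
  also have "norm \<dots> \<le> (\<Sum>j<N. a j * \<eta>)"
  proof (rule order_trans[OF norm_sum], rule sum_mono)
    fix j assume j: "j \<in> {..<N}"
    have "a j \<ge> 0" unfolding a_def using euler_weight_antimono[OF st(2)] by simp
    moreover have "norm (c j - D) \<le> \<eta>" if "a j \<noteq> 0"
      using that euler_weight_change_imp_node_between[OF st(2)] slopes j unfolding a_def c_def by auto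
    ultimately show "norm (a j *\<^sub>R (c j - D)) \<le> a j * \<eta>"
      by (cases "a j = 0") (auto intro: mult_left_mono)
  qed
  also have "\<dots> = (t - s) * \<eta>" using a_sum by (simp flip: sum_distrib_right)
  finally show ?thesis .
qed

lemma euler_polygon_lipschitz:
  assumes h: "h > 0" and M: "\<And>p. norm (W p) \<le> M"
    and s: "s \<in> {t0 - real N * h..t0}" and t: "t \<in> {t0 - real N * h..t0}"
  shows "norm (euler_polygon W t0 z0 h N t - euler_polygon W t0 z0 h N s) \<le> M * \<bar>t - s\<bar>"
proof -
  have *: "norm (euler_polygon W t0 z0 h N b - euler_polygon W t0 z0 h N a) \<le> M * \<bar>b - a\<bar>"
    if "a \<in> {t0 - real N * h..t0}" "b \<in> {t0 - real N * h..t0}" "a \<le> b" for a b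
    using euler_polygon_increment[OF h, of t0 N a b W z0 0 M] that M by (simp add: mult.commute)
  show ?thesis
    using *[OF s t] *[OF t s] by (cases "s \<le> t") (auto simp: norm_minus_commute abs_minus_commute)
qed

text \<open>All nodes that matter for an increment of length below \<open>\<rho>\<close> lie within \<open>(3 + 2 M) \<rho>\<close>
  of \<open>(t, c)\<close>.\<close>

lemma euler_polygon_local_increment:
  assumes h: "0 < h" "h < \<rho>" and M: "\<And>p. norm (W p) \<le> M"
    and s: "s \<in> {t0 - real N * h..t0}" and t: "t \<in> {t0 - real N * h..t0}" and st: "\<bar>s - t\<bar> < \<rho>"
    and c: "norm (euler_polygon W t0 z0 h N t - c) \<le> \<rho>"
    and W_near: "\<And>p. dist p (t, c) < (3 + 2 * M) * \<rho> \<Longrightarrow> norm (W p - D) \<le> e"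
  shows "norm (euler_polygon W t0 z0 h N s - euler_polygon W t0 z0 h N t - (s - t) *\<^sub>R D) \<le> e * \<bar>s - t\<bar>"
proof -
  let ?P = "euler_polygon W t0 z0 h N"
  have M0: "0 \<le> M" using M[of undefined] norm_ge_zero order_trans by blast
  define a where "a = min s t"
  define b where "b = max s t"
  have ab: "a \<in> {t0 - real N * h..t0}" "b \<in> {t0 - real N * h..t0}" "a \<le> b" "b - a = \<bar>s - t\<bar>"
    using s t unfolding a_def b_def by auto
  have "norm (?P b - ?P a - (b - a) *\<^sub>R D) \<le> (b - a) * e"
  proof (rule euler_polygon_increment[OF h(1)])
    fix j assume j: "j < N" and ja: "a < t0 - real j * h" and jb: "t0 - real j * h < b + h"
    define \<sigma> where "\<sigma> = t0 - real j * h"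
    have "real j * h \<le> real N * h" using j h by (intro mult_right_mono) auto
    then have \<sigma>: "\<sigma> \<in> {t0 - real N * h..t0}" using h unfolding \<sigma>_def by simp
    have node: "euler_node W t0 z0 h j = ?P \<sigma>"
      unfolding \<sigma>_def using euler_polygon_grid[OF h(1), of j N W t0 z0] j by simp
    have \<sigma>t: "\<bar>\<sigma> - t\<bar> < 2 * \<rho>" using ja jb h st unfolding \<sigma>_def a_def b_def by auto
    have "norm (?P \<sigma> - c) \<le> norm (?P \<sigma> - ?P t) + norm (?P t - c)"
      by (rule norm_diff_triangle_le) auto
    also have "\<dots> \<le> M * \<bar>\<sigma> - t\<bar> + \<rho>"
      using euler_polygon_lipschitz[of h W M, OF h(1) M t \<sigma>, of z0] c by (rule add_mono)
    also have "\<dots> \<le> M * (2 * \<rho>) + \<rho>" using \<sigma>t M0 by (simp add: mult_left_mono)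
    finally have "dist (\<sigma>, ?P \<sigma>) (t, c) < (3 + 2 * M) * \<rho>"
      using norm_Pair_le[of "\<sigma> - t" "?P \<sigma> - c"] \<sigma>t by (simp add: dist_norm algebra_simps)
    then show "norm (W (t0 - real j * h, euler_node W t0 z0 h j) - D) \<le> e"
      using W_near unfolding node \<sigma>_def by simp
  qed (use ab in auto)
  moreover have "norm (?P s - ?P t - (s - t) *\<^sub>R D) = norm (?P t - ?P s - (t - s) *\<^sub>R D)"
    using norm_minus_cancel[of "?P t - ?P s - (t - s) *\<^sub>R D"] by (simp add: algebra_simps)
  then have "norm (?P s - ?P t - (s - t) *\<^sub>R D) = norm (?P b - ?P a - (b - a) *\<^sub>R D)"
    unfolding a_def b_def by (cases "s \<le> t") (simp_all add: max_def min_def)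
  ultimately show ?thesis using ab(4) by (simp add: mult.commute)
qed

lemma has_vector_derivative_within_pointwise_limit:
  fixes F :: "nat \<Rightarrow> real \<Rightarrow> 'b::real_normed_vector"
  assumes lim: "\<And>s. s \<in> S \<Longrightarrow> (\<lambda>n. F n s) \<longlonglongrightarrow> g s" and t: "t \<in> S"
    and est: "\<And>e. 0 < e \<Longrightarrow> \<exists>d>0. \<forall>s\<in>S. \<bar>s - t\<bar> < d \<longrightarrow>
               (\<forall>\<^sub>F n in sequentially. norm (F n s - F n t - (s - t) *\<^sub>R D) \<le> e * \<bar>s - t\<bar>)"
  shows "(g has_vector_derivative D) (at t within S)"
  unfolding has_vector_derivative_def has_derivative_within_alt
proof (intro conjI allI impI)
  fix e :: real assume "0 < e"
  then obtain d where "d > 0" and d: "\<And>s. s \<in> S \<Longrightarrow> \<bar>s - t\<bar> < d \<Longrightarrow>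
      \<forall>\<^sub>F n in sequentially. norm (F n s - F n t - (s - t) *\<^sub>R D) \<le> e * \<bar>s - t\<bar>"
    using est by blast
  have "norm (g s - g t - (s - t) *\<^sub>R D) \<le> e * norm (s - t)" if "s \<in> S" "norm (s - t) < d" for s
  proof (rule tendsto_upperbound)
    show "(\<lambda>n. norm (F n s - F n t - (s - t) *\<^sub>R D)) \<longlonglongrightarrow> norm (g s - g t - (s - t) *\<^sub>R D)"
      by (intro tendsto_intros lim that t)
  qed (use d that in auto)
  with \<open>d > 0\<close> show "\<exists>d>0. \<forall>s\<in>S. norm (s - t) < d \<longrightarrow> norm (g s - g t - (s - t) *\<^sub>R D) \<le> e * norm (s - t)"
    by blast
qed (rule bounded_linear_scaleR_left)

lemma euler_polygon_limit_solves:
  fixes W :: "real \<times> 'b::real_normed_vector \<Rightarrow> 'b"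
  assumes contW: "continuous_on UNIV W" and M: "\<And>p. norm (W p) \<le> M"
    and h: "\<And>n. 0 < h n" "h \<longlonglongrightarrow> 0" and S: "\<And>n. {t0 - real (N n) * h n..t0} = S"
    and lim: "\<And>s. s \<in> S \<Longrightarrow> (\<lambda>n. euler_polygon W t0 z0 (h n) (N n) s) \<longlonglongrightarrow> g s"
    and t: "t \<in> S"
  shows "(g has_vector_derivative W (t, g t)) (at t within S)"
proof (rule has_vector_derivative_within_pointwise_limit[OF lim t])
  let ?F = "\<lambda>n. euler_polygon W t0 z0 (h n) (N n)"
  have M0: "0 \<le> M" using M[of undefined] norm_ge_zero order_trans by blast
  fix e :: real assume "0 < e"
  then obtain \<delta> where "\<delta> > 0" and \<delta>: "\<And>p. dist p (t, g t) < \<delta> \<Longrightarrow> dist (W p) (W (t, g t)) < e"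
    using contW unfolding continuous_on_iff by blast
  define \<rho> where "\<rho> = \<delta> / (3 + 2 * M)"
  have "\<rho> > 0" unfolding \<rho>_def using \<open>\<delta> > 0\<close> M0 by simp
  have "\<forall>\<^sub>F n in sequentially. norm (?F n s - ?F n t - (s - t) *\<^sub>R W (t, g t)) \<le> e * \<bar>s - t\<bar>"
    if "s \<in> S" "\<bar>s - t\<bar> < \<rho>" for s
  proof -
    have "\<forall>\<^sub>F n in sequentially. h n < \<rho> \<and> dist (?F n t) (g t) < \<rho>"
      using h(2) lim[OF t] \<open>\<rho> > 0\<close> by (intro eventually_conj order_tendstoD(2) tendstoD) auto
    then show ?thesis
    proof eventually_elim
      case (elim n)
      show ?case
      proof (rule euler_polygon_local_increment[of "h n" \<rho> W M])
        show "norm (W p - W (t, g t)) \<le> e" if "dist p (t, g t) < (3 + 2 * M) * \<rho>" for p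
          using \<delta>[of p] that M0 unfolding \<rho>_def dist_norm by simp
      qed (use elim h M S that t in \<open>auto simp: dist_norm\<close>)
    qed
  qed
  with \<open>\<rho> > 0\<close> show "\<exists>d>0. \<forall>s\<in>S. \<bar>s - t\<bar> < d \<longrightarrow>
      (\<forall>\<^sub>F n in sequentially. norm (?F n s - ?F n t - (s - t) *\<^sub>R W (t, g t)) \<le> e * \<bar>s - t\<bar>)"
    by blast
qed

text \<open>The Euler polygons with steps \<open>\<tau> / (n + 1)\<close> are equi-Lipschitz, so Arzela-Ascoli yields a
  convergent subsequence.\<close>

theorem peano_backward:
  fixes W :: "real \<times> 'b::euclidean_space \<Rightarrow> 'b"
  assumes contW: "continuous_on UNIV W" and M: "\<And>p. norm (W p) \<le> M" and \<tau>: "0 < \<tau>"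
  obtains z where "z t0 = z0"
    "\<And>t. t \<in> {t0-\<tau>..t0} \<Longrightarrow> (z has_vector_derivative W (t, z t)) (at t within {t0-\<tau>..t0})"
    "\<And>t. t \<in> {t0-\<tau>..t0} \<Longrightarrow> norm (z t - z0) \<le> M * (t0 - t)"
proof -
  define S where "S = {t0-\<tau>..t0}"
  have M0: "0 \<le> M" using M[of undefined] norm_ge_zero order_trans by blast
  define h where "h n = \<tau> / real (Suc n)" for n
  have h: "0 < h n" "{t0 - real (Suc n) * h n..t0} = S" for n
    unfolding h_def S_def using \<tau> by auto
  define F where "F n = euler_polygon W t0 z0 (h n) (Suc n)" for n
  have F_lip: "norm (F n t - F n s) \<le> M * \<bar>t - s\<bar>" if "s \<in> S" "t \<in> S" for n s t
    unfolding F_def using euler_polygon_lipschitz[of "h n" W M, OF h(1) M] that h(2) by blast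
  have F_t0: "F n t0 = z0" for n
    using euler_polygon_grid[OF h(1), of 0 "Suc n" W t0 z0] unfolding F_def by simp
  have t0: "t0 \<in> S" unfolding S_def using \<tau> by simp
  obtain g k where k: "strict_mono (k :: nat \<Rightarrow> nat)"
    and U: "\<And>e. 0 < e \<Longrightarrow> \<exists>N. \<forall>n x. n \<ge> N \<and> x \<in> S \<longrightarrow> norm (F (k n) x - g x) < e"
  proof (rule Arzela_Ascoli[of S F "norm z0 + M * \<tau>"])
    show "norm (F n x) \<le> norm z0 + M * \<tau>" if "x \<in> S" for n x
    proof -
      have "norm (F n x - z0) \<le> M * \<bar>x - t0\<bar>" using F_lip[OF t0 that, of n] F_t0 by simp
      also have "\<dots> \<le> M * \<tau>" using that M0 unfolding S_def by (intro mult_left_mono) auto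
      finally show ?thesis using norm_triangle_sub[of "F n x" z0] by simp
    qed
    show "\<exists>d>0. \<forall>n y. y \<in> S \<and> norm (x - y) < d \<longrightarrow> norm (F n x - F n y) < e"
      if "x \<in> S" "0 < e" for x e
    proof (intro exI[of _ "e / (M + 1)"] conjI allI impI)
      fix n y assume y: "y \<in> S \<and> norm (x - y) < e / (M + 1)"
      have "norm (F n x - F n y) \<le> M * \<bar>x - y\<bar>" using F_lip that y by blast
      also have "\<dots> \<le> M * (e / (M + 1))" using y M0 by (intro mult_left_mono) auto
      also have "\<dots> < e" using that M0 by (simp add: field_simps)
      finally show "norm (F n x - F n y) < e" .
    qed (use that M0 in simp)
  qed (auto simp: S_def)
  have lim: "(\<lambda>n. F (k n) s) \<longlonglongrightarrow> g s" if "s \<in> S" for s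
    using U that by (simp add: LIMSEQ_iff) meson
  have g_bound: "norm (g t - z0) \<le> M * (t0 - t)" if "t \<in> S" for t
  proof (rule tendsto_upperbound)
    show "(\<lambda>n. norm (F (k n) t - z0)) \<longlonglongrightarrow> norm (g t - z0)" by (intro tendsto_intros lim that)
    show "\<forall>\<^sub>F n in sequentially. M * (t0 - t) \<ge> norm (F (k n) t - z0)"
      using F_lip[OF that t0] F_t0 that unfolding S_def by (simp add: norm_minus_commute)
  qed simp
  have "h \<longlonglongrightarrow> 0"
    unfolding h_def divide_inverse by (intro tendsto_mult_right_zero LIMSEQ_inverse_real_of_nat)
  then have "(\<lambda>n. h (k n)) \<longlonglongrightarrow> 0"
    using filterlim_subseq[OF k] by (rule filterlim_compose)
  then have "(g has_vector_derivative W (t, g t)) (at t within S)" if "t \<in> S" for t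
    using euler_polygon_limit_solves[OF contW M, of "\<lambda>n. h (k n)" t0 "\<lambda>n. Suc (k n)" S z0 g t]
      h lim that unfolding F_def by blast
  moreover have "g t0 = z0" using g_bound[OF t0] by simp
  ultimately show thesis using that g_bound unfolding S_def by blast
qed

section \<open>Selections of the epigraph of a Lagrangian\<close>

definition lagrangian_epigraph :: "'a lagrangian \<Rightarrow> real \<Rightarrow> 'a \<Rightarrow> ('a \<times> real) set" where
  "lagrangian_epigraph L t x = {(v, s). L t x v \<le> ereal s}"

lemma Qset_iff_lagrangian_epigraph: "(v, \<eta>) \<in> Qset L t x \<longleftrightarrow> (v, - \<eta>) \<in> lagrangian_epigraph L t x"
  by (simp add: Qset_def lagrangian_epigraph_def)

lemma convex_lagrangian_epigraph:
  assumes L2: "L2 T L" and t: "t \<in> {0..T}"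
  shows "convex (lagrangian_epigraph L t x)"
  unfolding convex_alt
proof (intro ballI allI impI)
  fix y1 y2 and a :: real
  assume "y1 \<in> lagrangian_epigraph L t x" "y2 \<in> lagrangian_epigraph L t x" and a: "0 \<le> a \<and> a \<le> 1"
  then obtain v1 s1 v2 s2 where y: "y1 = (v1, s1)" "y2 = (v2, s2)"
    and 1: "L t x v1 \<le> ereal s1" and 2: "L t x v2 \<le> ereal s2"
    unfolding lagrangian_epigraph_def by auto
  have "L t x ((1 - a) *\<^sub>R v1 + a *\<^sub>R v2) \<le> ereal ((1 - a) * s1 + a * s2)"
  proof (cases "a = 0 \<or> a = 1")
    case False
    then have "0 < 1 - a" "1 - a < 1" using a by auto
    then have "L t x ((1 - a) *\<^sub>R v1 + (1 - (1 - a)) *\<^sub>R v2)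
               \<le> ereal (1 - a) * L t x v1 + ereal (1 - (1 - a)) * L t x v2"
      using L2 t unfolding L2_def by blast
    also have "\<dots> \<le> ereal (1 - a) * ereal s1 + ereal (1 - (1 - a)) * ereal s2"
      using \<open>0 < 1 - a\<close> \<open>1 - a < 1\<close> 1 2 by (intro add_mono ereal_mult_left_mono) auto
    finally show ?thesis by simp
  qed (use 1 2 in auto)
  then show "(1 - a) *\<^sub>R y1 + a *\<^sub>R y2 \<in> lagrangian_epigraph L t x"
    unfolding y lagrangian_epigraph_def by simp
qed

lemma closed_lagrangian_epigraph:
  assumes L1: "L1 T L" and t: "t \<in> {0..T}"
  shows "closed (lagrangian_epigraph L t x)"
  unfolding closed_sequential_limits
proof (intro allI impI, elim conjE)
  fix y :: "nat \<Rightarrow> 'a \<times> real" and l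
  assume y: "\<forall>n. y n \<in> lagrangian_epigraph L t x" and "y \<longlonglongrightarrow> l"
  then have lim: "(\<lambda>n. fst (y n)) \<longlonglongrightarrow> fst l" "(\<lambda>n. snd (y n)) \<longlonglongrightarrow> snd l"
    by (auto intro: tendsto_fst tendsto_snd)
  have "t \<in> {0..T} \<and> (\<forall>n. (\<lambda>_. t) n \<in> {0..T}) \<and> (\<lambda>_. t) \<longlonglongrightarrow> t \<and> (\<lambda>_. x) \<longlonglongrightarrow> x \<and>
        (\<lambda>n. fst (y n)) \<longlonglongrightarrow> fst l"
    using t lim(1) by simp
  from L1[unfolded L1_def, rule_format, OF this]
  have "L t x (fst l) \<le> liminf (\<lambda>n. L t x (fst (y n)))" .
  also have "\<dots> \<le> liminf (\<lambda>n. ereal (snd (y n)))"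
    using y by (intro Liminf_mono) (auto simp: lagrangian_epigraph_def case_prod_beta)
  also have "\<dots> = ereal (snd l)"
    using lim(2) by (intro lim_imp_Liminf) auto
  finally show "l \<in> lagrangian_epigraph L t x"
    by (cases l) (simp add: lagrangian_epigraph_def)
qed

lemma lagrangian_epigraph_nonempty:
  assumes L2: "L2 T L" and t: "t \<in> {0..T}"
  shows "lagrangian_epigraph L t x \<noteq> {}"
proof -
  obtain v where "L t x v \<noteq> \<infinity>" "L t x v \<noteq> -\<infinity>" using L2 t unfolding L2_def by blast
  then obtain c where "L t x v = ereal c" by (cases "L t x v") auto
  then have "(v, c) \<in> lagrangian_epigraph L t x" by (simp add: lagrangian_epigraph_def)
  then show ?thesis by blast
qed

lemma lower_hemicontinuous_lagrangian_epigraph: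
  assumes L3: "L3 T L" and K: "K \<subseteq> {0..T} \<times> UNIV"
  shows "lower_hemicontinuous_on K (\<lambda>(t, x). lagrangian_epigraph L t x)"
proof (rule lower_hemicontinuous_onI_sequentially, clarify)
  fix t x v s qs and e :: real
  assume tx: "(t, x) \<in> K" and vs: "(v, s) \<in> lagrangian_epigraph L t x"
    and qs: "\<And>n. qs n \<in> K" "qs \<longlonglongrightarrow> (t, x)" and "0 < e"
  have "t \<in> {0..T} \<and> (\<forall>n. fst (qs n) \<in> {0..T}) \<and>
        (\<lambda>n. fst (qs n)) \<longlonglongrightarrow> t \<and> (\<lambda>n. snd (qs n)) \<longlonglongrightarrow> x"
    using subsetD[OF K tx] subsetD[OF K qs(1)] tendsto_fst[OF qs(2)] tendsto_snd[OF qs(2)]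
    by (simp add: mem_Times_iff)
  from L3[unfolded L3_def, rule_format, OF this]
  obtain vn where vn: "vn \<longlonglongrightarrow> v" "(\<lambda>n. L (fst (qs n)) (snd (qs n)) (vn n)) \<longlonglongrightarrow> L t x v"
    by blast
  have "L t x v < ereal (s + e/2)"
    using vs \<open>0 < e\<close> by (simp add: lagrangian_epigraph_def le_less_trans)
  then have "\<forall>\<^sub>F n in sequentially. L (fst (qs n)) (snd (qs n)) (vn n) < ereal (s + e/2) \<and> dist (vn n) v < e/2"
    using vn \<open>0 < e\<close> by (intro eventually_conj order_tendstoD(2) tendstoD) auto
  then show "\<forall>\<^sub>F n in sequentially. \<exists>y'\<in>(case qs n of (t, x) \<Rightarrow> lagrangian_epigraph L t x). dist y' (v, s) < e"
  proof eventually_elim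
    case (elim n)
    have "dist (vn n, s + e/2) (v, s) \<le> norm (vn n - v) + norm (s + e/2 - s)"
      using norm_Pair_le[of "vn n - v" "s + e/2 - s"] by (simp add: dist_norm)
    also have "\<dots> < e" using elim \<open>0 < e\<close> by (simp add: dist_norm)
    finally show ?case
      using elim by (intro bexI[of _ "(vn n, s + e/2)"]) (auto simp: lagrangian_epigraph_def split: prod.split)
  qed
qed

lemma bounded_continuous_extension:
  fixes f :: "'p::{metric_space,second_countable_topology} \<Rightarrow> 'y::real_inner"
  assumes K: "compact K" and f: "continuous_on K f"
  obtains g B where "continuous_on UNIV g" "0 < B" "\<And>p. norm (g p) \<le> B" "\<And>p. p \<in> K \<Longrightarrow> g p = f p"
proof -
  obtain B where "0 < B" "\<And>p. p \<in> K \<Longrightarrow> norm (f p) \<le> B"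
    using compact_imp_bounded[OF compact_continuous_image[OF f K]] unfolding bounded_pos by blast
  moreover obtain g where "continuous_on UNIV g" "range g \<subseteq> cball 0 B" "\<And>p. p \<in> K \<Longrightarrow> g p = f p"
    by (rule Dugundji[of "cball 0 B" UNIV K f])
       (use \<open>0 < B\<close> \<open>\<And>p. p \<in> K \<Longrightarrow> norm (f p) \<le> B\<close> compact_imp_closed[OF K] f in auto)
  moreover from \<open>range g \<subseteq> cball 0 B\<close> have "norm (g p) \<le> B" for p
    by (metis UNIV_I image_subset_iff mem_cball_0)
  ultimately show thesis using that by blast
qed

lemma lagrangian_epigraph_selection:
  assumes L1: "L1 T L" and L2: "L2 T L" and L3: "L3 T L"
    and K: "compact K" "K \<subseteq> {0..T} \<times> UNIV"
    and p0: "(t0, x0) \<in> K" and y0: "y0 \<in> lagrangian_epigraph L t0 x0"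
  obtains f :: "real \<times> 'a::euclidean_space \<Rightarrow> 'a \<times> real" and B
  where "continuous_on UNIV f" "0 < B" "\<And>p. norm (f p) \<le> B" "f (t0, x0) = y0"
    "\<And>t x. (t, x) \<in> K \<Longrightarrow> f (t, x) \<in> lagrangian_epigraph L t x"
proof -
  have T: "t \<in> {0..T}" if "(t, x) \<in> K" for t x using that K(2) by auto
  obtain f where "continuous_on K f" "f (t0, x0) = y0"
    and f: "\<And>p. p \<in> K \<Longrightarrow> f p \<in> (\<lambda>(t, x). lagrangian_epigraph L t x) p"
  proof (rule michael_selection[OF K(1) _ _ _ lower_hemicontinuous_lagrangian_epigraph[OF L3 K(2)] p0])
    show "convex ((\<lambda>(t, x). lagrangian_epigraph L t x) p)" if "p \<in> K" for p
      using that convex_lagrangian_epigraph[OF L2 T] by (cases p) simp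
    show "closed ((\<lambda>(t, x). lagrangian_epigraph L t x) p)" if "p \<in> K" for p
      using that closed_lagrangian_epigraph[OF L1 T] by (cases p) simp
    show "(\<lambda>(t, x). lagrangian_epigraph L t x) p \<noteq> {}" if "p \<in> K" for p
      using that lagrangian_epigraph_nonempty[OF L2 T] by (cases p) simp
  qed (use y0 in auto)
  moreover obtain g B where "continuous_on UNIV g" "0 < B" "\<And>p. norm (g p) \<le> B" "\<And>p. p \<in> K \<Longrightarrow> g p = f p"
    using bounded_continuous_extension[OF K(1) \<open>continuous_on K f\<close>] by blast
  ultimately show thesis using that[of g B] p0 f by fastforce
qed

lemma backward_curve_along_field:
  fixes f :: "real \<times> 'a::euclidean_space \<Rightarrow> 'a \<times> real"
  assumes f: "continuous_on UNIV f" and B: "\<And>p. norm (f p) \<le> B" and \<tau>: "0 < \<tau>"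
  obtains x u where "x t0 = x0" "u t0 = u0"
    "\<And>t. t \<in> {t0-\<tau>..t0} \<Longrightarrow> (x has_vector_derivative fst (f (t, x t))) (at t within {t0-\<tau>..t0})"
    "\<And>t. t \<in> {t0-\<tau>..t0} \<Longrightarrow> (u has_real_derivative - snd (f (t, x t))) (at t within {t0-\<tau>..t0})"
    "\<And>t. t \<in> {t0-\<tau>..t0} \<Longrightarrow> dist x0 (x t) \<le> B * (t0 - t)"
proof -
  define W where "W p = (fst (f (fst p, fst (snd p))), - snd (f (fst p, fst (snd p))))"
    for p :: "real \<times> 'a \<times> real"
  have "continuous_on UNIV W"
    unfolding W_def by (intro continuous_intros continuous_on_compose2[OF f]) auto
  moreover have "norm (W p) \<le> B" for p
    using B[of "(fst p, fst (snd p))"] unfolding W_def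
    by (cases "f (fst p, fst (snd p))") (simp add: norm_Pair)
  ultimately obtain z where z0: "z t0 = (x0, u0)"
    and z': "\<And>t. t \<in> {t0-\<tau>..t0} \<Longrightarrow> (z has_vector_derivative W (t, z t)) (at t within {t0-\<tau>..t0})"
    and z_bound: "\<And>t. t \<in> {t0-\<tau>..t0} \<Longrightarrow> norm (z t - (x0, u0)) \<le> B * (t0 - t)"
    using peano_backward[OF _ _ \<tau>] by blast
  show thesis
  proof (rule that[of "\<lambda>t. fst (z t)" "\<lambda>t. snd (z t)"])
    fix t assume t: "t \<in> {t0-\<tau>..t0}"
    show "((\<lambda>t. fst (z t)) has_vector_derivative fst (f (t, fst (z t)))) (at t within {t0-\<tau>..t0})"
      using has_derivative_fst[OF z'[OF t, unfolded has_vector_derivative_def]]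
      by (simp add: has_vector_derivative_def W_def)
    show "((\<lambda>t. snd (z t)) has_real_derivative - snd (f (t, fst (z t)))) (at t within {t0-\<tau>..t0})"
      using has_derivative_snd[OF z'[OF t, unfolded has_vector_derivative_def]]
      by (simp add: has_real_derivative_iff_has_vector_derivative has_vector_derivative_def W_def)
    show "dist x0 (fst (z t)) \<le> B * (t0 - t)"
      using norm_fst_le[of "fst (z t) - x0" "snd (z t) - u0"] z_bound[OF t]
      by (cases "z t") (simp add: dist_norm norm_minus_commute)
  qed (simp_all add: z0)
qed

theorem lemma5p4:
  fixes T :: real and L :: "'a::euclidean_space lagrangian"
    and t0 :: real and x0 :: 'a and u0 :: real and v0 :: 'a
  assumes "L1 T L" and "L2 T L" and "L3 T L"
    and "t0 \<in> {0<..T}"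
    and "v0 \<in> domL L t0 x0"
  shows "\<exists>\<tau>>0. \<exists>(x::real \<Rightarrow> 'a) (u::real \<Rightarrow> real) x' u'.
           t0 - \<tau> \<ge> 0 \<and>
           (\<forall>t\<in>{t0-\<tau>..t0}. (x has_vector_derivative x' t) (at t within {t0-\<tau>..t0}) \<and>
                              (u has_real_derivative u' t) (at t within {t0-\<tau>..t0})) \<and>
           continuous_on {t0-\<tau>..t0} x' \<and> continuous_on {t0-\<tau>..t0} u' \<and>
           x t0 = x0 \<and> u t0 = u0 \<and>
           (\<forall>t\<in>{t0-\<tau>..t0}. (x' t, u' t) \<in> Qset L t (x t)) \<and>
           x' t0 = v0 \<and> ereal (u' t0) = - L t0 x0 v0"
proof -
  obtain c where c: "L t0 x0 v0 = ereal c"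
    using assms(5) unfolding domL_def by (cases "L t0 x0 v0") auto
  define K where "K = {0..t0} \<times> cball x0 1"
  obtain f B where f: "continuous_on UNIV f" "0 < B" "\<And>p. norm (f p) \<le> B" "f (t0, x0) = (v0, c)"
    and f_epi: "\<And>t x. (t, x) \<in> K \<Longrightarrow> f (t, x) \<in> lagrangian_epigraph L t x"
    by (rule lagrangian_epigraph_selection[OF assms(1-3), of K t0 x0 "(v0, c)"])
       (use assms(4) c in \<open>auto simp: K_def lagrangian_epigraph_def intro: compact_Times\<close>)
  define \<tau> where "\<tau> = min t0 (1 / B)"
  have \<tau>: "0 < \<tau>" "\<tau> \<le> t0" "B * \<tau> \<le> 1"
    unfolding \<tau>_def using assms(4) f(2) by (auto simp: min_def field_simps)
  define S where "S = {t0-\<tau>..t0}"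
  obtain x u where x: "x t0 = x0" "\<And>t. t \<in> S \<Longrightarrow> (x has_vector_derivative fst (f (t, x t))) (at t within S)"
    and u: "u t0 = u0" "\<And>t. t \<in> S \<Longrightarrow> (u has_real_derivative - snd (f (t, x t))) (at t within S)"
    and x_near: "\<And>t. t \<in> S \<Longrightarrow> dist x0 (x t) \<le> B * (t0 - t)"
    using backward_curve_along_field[OF f(1,3) \<tau>(1)] unfolding S_def by metis
  have "(t, x t) \<in> K" if "t \<in> S" for t
  proof -
    have "B * (t0 - t) \<le> B * \<tau>" using that f(2) unfolding S_def by (intro mult_left_mono) auto
    then show ?thesis using x_near[OF that] that \<tau> unfolding K_def S_def by auto
  qed
  moreover have "continuous_on S (\<lambda>t. f (t, x t))"
    using x(2) by (intro continuous_on_compose2[OF f(1)] continuous_intros)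
                  (auto simp: continuous_on_eq_continuous_within intro: has_vector_derivative_continuous)
  ultimately show ?thesis
    using \<tau> x u f(4) c f_epi unfolding S_def Qset_iff_lagrangian_epigraph
    by (intro conjI exI[of _ \<tau>] exI[of _ x] exI[of _ u]
          exI[of _ "\<lambda>t. fst (f (t, x t))"] exI[of _ "\<lambda>t. - snd (f (t, x t))"])
       (auto intro: continuous_intros)
qed

end
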